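(* Let $F_N:\mathbb{R}^n\to\mathbb{R}$ be the function computed by a feedforward ReLU network (as described in the context), let $P=\{\mathbf{x}\in\mathbb{R}^n : A\mathbf{x}\le \mathbf{c}\}$ be a nonempty compact polyhedron, and let $\delta>0$. Suppose the procedures LocalSearch and GlobalSearch satisfy properties (P1) and (P2) described in the context. Then the algorithm FindUpperBound$(F_N,P,\delta)$ described in the context always terminates, and the value $u$ it returns satisfies $$u^*\le u\le u^*+\delta,\qquad\text{where } u^*=\max_{\mathbf{x}\in P}F_N(\mathbf{x}).$$
   Context: Network: integers $n,k,N\ge 1$; matrices $W_0\in\mathbb{R}^{N\times n}$, $W_i\in\mathbb{R}^{N\times N}$ for $1\le i\le k-1$, $W_k\in\mathbb{R}^{1\times N}$ and vectors $\mathbf{b}_0,\dots,\mathbf{b}_{k-1}\in\mathbb{R}^N$, $b_k\in\mathbb{R}$. Let $\sigma(z)=\max(z,0)$, applied componentwise to vectors. For input $\mathbf{x}\in\mathbb{R}^n$ set $\mathbf{z}_0=\mathbf{x}$, $\mathbf{z}_{i+1}=\sigma(W_i\mathbf{z}_i+\mathbf{b}_i)$ for $i=0,\dots,k-1$, and $F_N(\mathbf{x})=W_k\mathbf{z}_k+b_k$. Property (P1): given $\mathbf{x}\in P$, LocalSearch$(\mathbf{x})$ returns a pair $(\mathbf{x}',u')$ with $\mathbf{x}'\in P$, $u'=F_N(\mathbf{x}')$ and $F_N(\mathbf{x}')\ge F_N(\mathbf{x})$. Property (P2): given a real number $u$, GlobalSearch$(u)$ either declares "feasible" and returns $(\mathbf{x}',u')$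 with $\mathbf{x}'\in P$, $u'=F_N(\mathbf{x}')\ge u$, or declares "not feasible", which it does only if no $\mathbf{x}'\in P$ satisfies $F_N(\mathbf{x}')\ge u$. Algorithm FindUpperBound$(F_N,P,\delta)$: pick any $\mathbf{x}\in P$. Repeat: (1) $(\mathbf{x},u)\leftarrow$ LocalSearch$(\mathbf{x})$; (2) $u\leftarrow u+\delta$; (3) call GlobalSearch$(u)$; if it is feasible with output $(\mathbf{x}',u')$, set $(\mathbf{x},u)\leftarrow(\mathbf{x}',u')$ and repeat; otherwise stop and return $(\mathbf{x},u)$. *)

theory Defs
  imports "HOL-Analysis.Analysis" "HOL-Library.While_Combinator"
begin

definition relu :: "real ^ 'h \<Rightarrow> real ^ 'h" where
  "relu v = (\<chi> i. max (v $ i) 0)"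

text \<open>Input in R^n (index type 'n), hidden width N = CARD('h).
  W0 :: N x n matrix, b0; Ws = [(W_1,b_1),...,(W_{k-1},b_{k-1})] (so k = length Ws + 1 \<ge> 1);
  output row Wk (as a vector in R^N) and scalar bk.\<close>
definition relu_net ::
  "real ^ 'n ^ 'h \<Rightarrow> real ^ 'h \<Rightarrow> ((real ^ 'h ^ 'h) \<times> (real ^ 'h)) list \<Rightarrow> real ^ 'h \<Rightarrow> real
   \<Rightarrow> real ^ 'n \<Rightarrow> real" where
  "relu_net W0 b0 Ws Wk bk x =
     Wk \<bullet> fold (\<lambda>(W, b) z. relu (W *v z + b)) Ws (relu (W0 *v x + b0)) + bk"

text \<open>State: Inl x = continue from x; Inr (x,u) = stopped,
  returning (x,u).  LocalSearch: x \<mapsto> (x',u');  GlobalSearch: u \<mapsto> Some (x',u') ("feasible")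
  or None ("not feasible").\<close>
definition fub_step ::
  "('x \<Rightarrow> ('x \<times> real)) \<Rightarrow> (real \<Rightarrow> (('x \<times> real)) option) \<Rightarrow> real \<Rightarrow> 'x \<Rightarrow> 'x + (('x \<times> real))" where
  "fub_step LS GS \<delta> x =
     (let (x1, u1) = LS x; u2 = u1 + \<delta> in
      case GS u2 of Some (x', u') \<Rightarrow> Inl x' | None \<Rightarrow> Inr (x1, u2))"

text \<open>FindUpperBound: None means non-termination, Some (x,u) means it stops returning (x,u).\<close>
definition find_upper_bound ::
  "('x \<Rightarrow> ('x \<times> real)) \<Rightarrow> (real \<Rightarrow> (('x \<times> real)) option) \<Rightarrow> real \<Rightarrow> 'x \<Rightarrow> (('x \<times> real)) option" where
  "find_upper_bound LS GS \<delta> x0 =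
     map_option projr (while_option isl (\<lambda>s. fub_step LS GS \<delta> (projl s)) (Inl x0))"

end

theory Submission
  imports Defs
begin

text \<open>Every successful global search raises the objective by at least \<open>\<delta>\<close>, and the objective
  is bounded above on \<open>P\<close> (a continuous function on a compact set), so the loop can only run
  finitely often; the count \<open>\<lceil>(sup F - F x) / \<delta>\<rceil>\<close> decreases strictly.  When the global search
  fails at \<open>u = F x + \<delta>\<close>, no point of \<open>P\<close> reaches \<open>u\<close>, so \<open>sup F \<le> u\<close>, while
  \<open>u - \<delta> = F x \<le> sup F\<close>.\<close>

lemma continuous_on_relu [continuous_intros]:
  "continuous_on S g \<Longrightarrow> continuous_on S (\<lambda>x. relu (g x))"
  unfolding relu_def by (intro continuous_intros)

lemma continuous_on_matrix_vector_mult [continuous_intros]: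
  fixes W :: "real ^ 'a ^ 'b"
  shows "continuous_on S g \<Longrightarrow> continuous_on S (\<lambda>x. W *v g x)"
  by (rule bounded_linear.continuous_on[OF matrix_vector_mul_bounded_linear])

lemma continuous_on_relu_layers [continuous_intros]:
  fixes Ws :: "((real ^ 'h ^ 'h) \<times> (real ^ 'h)) list"
  assumes "continuous_on S g"
  shows "continuous_on S (\<lambda>x. fold (\<lambda>(W, b) z. relu (W *v z + b)) Ws (g x))"
  using assms
proof (induction Ws arbitrary: g)
  case Nil
  then show ?case by simp
next
  case (Cons Wb Ws)
  obtain W b where Wb: "Wb = (W, b)" by force
  have "continuous_on S (\<lambda>x. relu (W *v g x + b))"
    using Cons.prems by (intro continuous_intros)
  from Cons.IH[OF this] show ?case by (simp add: Wb)
qed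

lemma continuous_on_relu_net: "continuous_on S (relu_net W0 b0 Ws Wk bk)"
  unfolding relu_net_def[abs_def] by (intro continuous_intros)

lemma nat_ceiling_steps_decrease:
  fixes a b S \<delta> :: real
  assumes "\<delta> > 0" and "a + \<delta> \<le> b" and "b \<le> S"
  shows "nat \<lceil>(S - b) / \<delta>\<rceil> < nat \<lceil>(S - a) / \<delta>\<rceil>"
proof -
  have "(S - b) / \<delta> \<le> (S - a - \<delta>) / \<delta>"
    using assms by (intro divide_right_mono) auto
  also have "\<dots> = (S - a) / \<delta> - 1"
    using assms by (simp add: diff_divide_distrib)
  finally have "(S - b) / \<delta> \<le> (S - a) / \<delta> - 1" .
  then have "\<lceil>(S - b) / \<delta>\<rceil> \<le> \<lceil>(S - a) / \<delta>\<rceil> - 1"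
    by (metis ceiling_diff_one ceiling_mono)
  moreover have "1 \<le> \<lceil>(S - a) / \<delta>\<rceil>"
    using assms by (simp add: field_simps le_ceiling_iff)
  ultimately show ?thesis by linarith
qed

context
  fixes F :: "'x \<Rightarrow> real" and P :: "'x set"
    and LS :: "'x \<Rightarrow> 'x \<times> real" and GS :: "real \<Rightarrow> ('x \<times> real) option" and \<delta> :: real
  assumes bdd: "bdd_above (F ` P)"
    and delta_pos: "\<delta> > 0"
    and LS_spec: "\<forall>x\<in>P. fst (LS x) \<in> P \<and> snd (LS x) = F (fst (LS x)) \<and> F (fst (LS x)) \<ge> F x"
    and GS_spec: "\<forall>u. (case GS u of
                     Some (x', u') \<Rightarrow> x' \<in> P \<and> u' = F x' \<and> u' \<ge> u
                   | None \<Rightarrow> \<not> (\<exists>x'\<in>P. F x' \<ge> u))"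
begin

lemma fub_step_cases:
  assumes "x \<in> P"
  obtains x' where "fub_step LS GS \<delta> x = Inl x'" "x' \<in> P" "F x + \<delta> \<le> F x'"
  | x' u where "fub_step LS GS \<delta> x = Inr (x', u)" "Sup (F ` P) \<le> u" "u \<le> Sup (F ` P) + \<delta>"
proof -
  obtain x1 u1 where LS_x: "LS x = (x1, u1)" by force
  have x1P: "x1 \<in> P" and u1: "u1 = F x1" and "F x \<le> F x1"
    using LS_spec assms LS_x by auto
  show thesis
  proof (cases "GS (u1 + \<delta>)")
    case None
    then have "\<forall>x'\<in>P. F x' < u1 + \<delta>"
      using GS_spec[rule_format, of "u1 + \<delta>"] by auto
    then have Sup_le: "Sup (F ` P) \<le> u1 + \<delta>"
      using assms by (intro cSUP_least) (auto intro: less_imp_le)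
    have "u1 \<le> Sup (F ` P)"
      using bdd x1P u1 by (simp add: cSUP_upper)
    moreover have "fub_step LS GS \<delta> x = Inr (x1, u1 + \<delta>)"
      by (simp add: fub_step_def LS_x None)
    ultimately show thesis
      using Sup_le that(2) by simp
  next
    case (Some p)
    obtain x' u' where p: "p = (x', u')" by force
    have "x' \<in> P" and "u' = F x'" and "u1 + \<delta> \<le> u'"
      using GS_spec[rule_format, of "u1 + \<delta>"] Some p by auto
    moreover have "fub_step LS GS \<delta> x = Inl x'"
      by (simp add: fub_step_def LS_x Some p)
    moreover have "F x + \<delta> \<le> F x'"
      using calculation u1 \<open>F x \<le> F x1\<close> by simp
    ultimately show thesis
      using that(1) by simp
  qed
qed

lemma find_upper_bound_correct:
  assumes "x0 \<in> P"
  shows "\<exists>x u. find_upper_bound LS GS \<delta> x0 = Some (x, u) \<and>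
           Sup (F ` P) \<le> u \<and> u \<le> Sup (F ` P) + \<delta>"
proof -
  define S where "S = Sup (F ` P)"
  define step :: "'x + 'x \<times> real \<Rightarrow> 'x + 'x \<times> real"
    where "step = (\<lambda>s. fub_step LS GS \<delta> (projl s))"
  define inv :: "'x + 'x \<times> real \<Rightarrow> bool"
    where "inv s = (case s of Inl x \<Rightarrow> x \<in> P | Inr (x, u) \<Rightarrow> S \<le> u \<and> u \<le> S + \<delta>)" for s
  define steps_left :: "'x + 'x \<times> real \<Rightarrow> nat"
    where "steps_left s = (case s of Inl x \<Rightarrow> nat \<lceil>(S - F x) / \<delta>\<rceil> + 1 | Inr _ \<Rightarrow> 0)" for s
  have step_ok: "inv (step s) \<and> steps_left (step s) < steps_left s"
    if inv_s: "inv s" and isl_s: "isl s" for s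
  proof -
    obtain x where s: "s = Inl x" and "x \<in> P"
      using inv_s isl_s by (cases s) (auto simp: inv_def)
    from \<open>x \<in> P\<close> show ?thesis
    proof (cases rule: fub_step_cases)
      case (1 x')
      then have "nat \<lceil>(S - F x') / \<delta>\<rceil> < nat \<lceil>(S - F x) / \<delta>\<rceil>"
        using delta_pos bdd by (intro nat_ceiling_steps_decrease) (auto simp: S_def cSUP_upper)
      with 1 show ?thesis by (simp add: step_def s inv_def steps_left_def)
    qed (simp_all add: step_def s inv_def steps_left_def S_def)
  qed
  have inv0: "inv (Inl x0)" by (simp add: inv_def assms)
  obtain t where t: "while_option isl step (Inl x0) = Some t"
    using measure_while_option_Some[of inv isl step steps_left, OF step_ok inv0] by blast
  have "inv t"
    using while_option_rule[of inv isl step, OF step_ok[THEN conjunct1] t inv0] .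
  obtain x u where t_stop: "t = Inr (x, u)"
    using while_option_stop[OF t] by (cases t) auto
  have "find_upper_bound LS GS \<delta> x0 = Some (x, u)"
    using t t_stop unfolding find_upper_bound_def step_def by simp
  moreover have "S \<le> u \<and> u \<le> S + \<delta>"
    using \<open>inv t\<close> t_stop by (simp add: inv_def)
  ultimately show ?thesis
    unfolding S_def by blast
qed

end

theorem mainTheorem1:
  fixes W0 :: "real ^ 'n ^ 'h" and b0 :: "real ^ 'h"
    and Ws :: "((real ^ 'h ^ 'h) \<times> (real ^ 'h)) list" and Wk :: "real ^ 'h" and bk :: real
    and A :: "real ^ 'n ^ 'm" and c :: "real ^ 'm"
    and LS :: "real ^ 'n \<Rightarrow> (real ^ 'n) \<times> real"
    and GS :: "real \<Rightarrow> ((real ^ 'n) \<times> real) option"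
    and \<delta> :: real and x0 :: "real ^ 'n"
  defines "F \<equiv> relu_net W0 b0 Ws Wk bk"
      and "P \<equiv> {x. A *v x \<le> c}"
  assumes P_ne: "P \<noteq> {}" and P_compact: "compact P"
    and delta_pos: "\<delta> > 0"
    and P1: "\<forall>x\<in>P. fst (LS x) \<in> P \<and> snd (LS x) = F (fst (LS x)) \<and> F (fst (LS x)) \<ge> F x"
    and P2: "\<forall>u. (case GS u of
                     Some (x', u') \<Rightarrow> x' \<in> P \<and> u' = F x' \<and> u' \<ge> u
                   | None \<Rightarrow> \<not> (\<exists>x'\<in>P. F x' \<ge> u))"
    and x0: "x0 \<in> P"
  shows "\<exists>x u. find_upper_bound LS GS \<delta> x0 = Some (x, u) \<and>
           Sup (F ` P) \<le> u \<and> u \<le> Sup (F ` P) + \<delta>"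
proof -
  have "compact (F ` P)"
    unfolding F_def by (rule compact_continuous_image[OF continuous_on_relu_net P_compact])
  then have "bdd_above (F ` P)"
    by (simp add: compact_imp_bounded bounded_imp_bdd_above)
  from find_upper_bound_correct[OF this delta_pos P1 P2 x0] show ?thesis .
qed

end
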